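(* Let $(\Omega, \mathcal R, \mathcal K)$ be a kinetic system that satisfies the detailed balance property. If $\mathcal M \neq \{0\}$, then there exists an $s \in \Omega$ such that the reduced system $(V, \mathcal R_V, \mathcal K[n_s])$, with $V := \Omega \setminus \{s\}$, satisfies the detailed balance condition for any value of $n_s > 0$.
   Context: A kinetic system $(\Omega,\mathcal R,\mathcal K)$ is a bidirectional chemical network with substances $\Omega=\{1,\dots,N\}$, reactions $\mathcal R\subset\mathbb Z^N\setminus\{0\}$ (with $R\in\mathcal R\Rightarrow -R\in\mathcal R$) and mass-action rates $K_R>0$; $I(R)=\{i:R(i)<0\}$, $F(R)=\{i:R(i)>0\}$. It satisfies detailed balance if there is $\overline N\in\mathbb R_+^N$ with $K_R\prod_{i\in I(R)}\overline N_i^{-R(i)}=K_{-R}\prod_{i\in F(R)}\overline N_i^{R(i)}$ for all reactions $R$. $\mathcal M=(\operatorname{span}\mathcal R)^\perp$ is the space of conservation laws. For $U=\{s\}$ and $V=\Omega\setminus\{s\}$, $\pi_V$ is the projection onto coordinates in $V$, the reduced reactions are $\mathcal R_V=\{\pi_V\overline R\neq0:\overline R\in\mathcal R\}$, and the reduced rates are $\mathcal K[n_s](R)=\sum_{\overline R\in\mathcal R:\ \pi_V\overline R=R}K_{\overline R}\, n_s^{-\overline R(s)\mathbf 1[\overline R(s)<0]}$ (i.e. $K_{\overline R}$ multiplied by $n_s^{-\overline R(s)}$ when $s\in I(\overline R)$). *)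

theory Defs
  imports Complex_Main
begin

definition kinetic_system :: "'a set \<Rightarrow> ('a \<Rightarrow> int) set \<Rightarrow> (('a \<Rightarrow> int) \<Rightarrow> real) \<Rightarrow> bool" where
  "kinetic_system \<Omega> \<R> K \<longleftrightarrow>
     finite \<Omega> \<and> finite \<R> \<and>
     (\<forall>R\<in>\<R>. R \<noteq> (\<lambda>_. 0) \<and> (\<lambda>i. - R i) \<in> \<R> \<and> (\<forall>i. i \<notin> \<Omega> \<longrightarrow> R i = 0) \<and> K R > 0)"

definition educts :: "'a set \<Rightarrow> ('a \<Rightarrow> int) \<Rightarrow> 'a set" where
  "educts \<Omega> R = {i\<in>\<Omega>. R i < 0}"

definition products :: "'a set \<Rightarrow> ('a \<Rightarrow> int) \<Rightarrow> 'a set" where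
  "products \<Omega> R = {i\<in>\<Omega>. R i > 0}"

definition detailed_balance :: "'a set \<Rightarrow> ('a \<Rightarrow> int) set \<Rightarrow> (('a \<Rightarrow> int) \<Rightarrow> real) \<Rightarrow> bool" where
  "detailed_balance \<Omega> \<R> K \<longleftrightarrow>
     (\<exists>Nb :: 'a \<Rightarrow> real. (\<forall>i\<in>\<Omega>. Nb i > 0) \<and>
        (\<forall>R\<in>\<R>. K R * (\<Prod>i\<in>educts \<Omega> R. Nb i ^ nat (- R i))
                 = K (\<lambda>i. - R i) * (\<Prod>i\<in>products \<Omega> R. Nb i ^ nat (R i))))"

text \<open>Space of conservation laws M = (span R)^perp, as real vectors on Omega
  (orthogonality to the span is written as orthogonality to the spanning reactions).\<close>
definition conservation_laws :: "'a set \<Rightarrow> ('a \<Rightarrow> int) set \<Rightarrow> ('a \<Rightarrow> real) set" where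
  "conservation_laws \<Omega> \<R> =
     {m. (\<forall>i. i \<notin> \<Omega> \<longrightarrow> m i = 0) \<and> (\<forall>R\<in>\<R>. (\<Sum>i\<in>\<Omega>. m i * of_int (R i)) = 0)}"

definition proj_away :: "'a \<Rightarrow> ('a \<Rightarrow> int) \<Rightarrow> ('a \<Rightarrow> int)" where
  "proj_away s R = (\<lambda>i. if i = s then 0 else R i)"

definition reduced_reactions :: "'a \<Rightarrow> ('a \<Rightarrow> int) set \<Rightarrow> ('a \<Rightarrow> int) set" where
  "reduced_reactions s \<R> = {proj_away s R | R. R \<in> \<R> \<and> proj_away s R \<noteq> (\<lambda>_. 0)}"

text \<open>Reduced rates K[n_s](R) = sum over preimages of K, times n_s^(-R(s)) when s is an educt
  (the exponent nat(-R s) is 0 otherwise).\<close>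
definition reduced_rates :: "'a \<Rightarrow> ('a \<Rightarrow> int) set \<Rightarrow> (('a \<Rightarrow> int) \<Rightarrow> real) \<Rightarrow> real \<Rightarrow> ('a \<Rightarrow> int) \<Rightarrow> real" where
  "reduced_rates s \<R> K ns R =
     (\<Sum>Rb\<in>{Rb\<in>\<R>. proj_away s Rb = R}. K Rb * ns ^ nat (- Rb s))"

end

theory Submission
  imports Defs
begin

text \<open>Moving a detailed-balance equilibrium \<open>N\<close> along a conservation law \<open>m\<close>,
  \<open>N i \<mapsto> N i * exp (t * m i)\<close>, multiplies both sides of every balance equation by the
  same factor, so it yields again an equilibrium. If \<open>m s \<noteq> 0\<close>, a suitable \<open>t\<close> makes the
  equilibrium concentration of \<open>s\<close> equal to any prescribed \<open>n\<^sub>s > 0\<close>. Freezing \<open>s\<close> at that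
  value, the balance equation of each reaction becomes the balance equation of its projection
  with the factor \<open>n\<^sub>s\<close> moved into the rate; summing over all reactions with the same
  projection gives detailed balance of the reduced system.\<close>

definition detailed_balance_at ::
    "'a set \<Rightarrow> ('a \<Rightarrow> int) set \<Rightarrow> (('a \<Rightarrow> int) \<Rightarrow> real) \<Rightarrow> ('a \<Rightarrow> real) \<Rightarrow> bool" where
  "detailed_balance_at \<Omega> \<R> K N \<longleftrightarrow> (\<forall>i\<in>\<Omega>. N i > 0) \<and>
     (\<forall>R\<in>\<R>. K R * (\<Prod>i\<in>\<Omega>. N i ^ nat (- R i)) = K (\<lambda>i. - R i) * (\<Prod>i\<in>\<Omega>. N i ^ nat (R i)))"

lemma prod_educts:
  fixes f :: "'a \<Rightarrow> 'b::comm_monoid_mult"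
  assumes "finite \<Omega>"
  shows "(\<Prod>i\<in>educts \<Omega> R. f i ^ nat (- R i)) = (\<Prod>i\<in>\<Omega>. f i ^ nat (- R i))"
  unfolding educts_def by (rule prod.mono_neutral_left) (use assms in \<open>auto simp: not_less\<close>)

lemma prod_products:
  fixes f :: "'a \<Rightarrow> 'b::comm_monoid_mult"
  assumes "finite \<Omega>"
  shows "(\<Prod>i\<in>products \<Omega> R. f i ^ nat (R i)) = (\<Prod>i\<in>\<Omega>. f i ^ nat (R i))"
  unfolding products_def by (rule prod.mono_neutral_left) (use assms in \<open>auto simp: not_less\<close>)

lemma detailed_balance_iff_ex_detailed_balance_at:
  assumes "finite \<Omega>"
  shows "detailed_balance \<Omega> \<R> K \<longleftrightarrow> (\<exists>N. detailed_balance_at \<Omega> \<R> K N)"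
  unfolding detailed_balance_def detailed_balance_at_def
  by (simp add: prod_educts[OF assms] prod_products[OF assms])

lemma prod_power_mult_exp:
  "(\<Prod>i\<in>A. (N i * exp (t * m i)) ^ n i)
     = (\<Prod>i\<in>A. N i ^ n i) * exp (t * (\<Sum>i\<in>A. m i * real (n i)))"
proof -
  have "(\<Prod>i\<in>A. (N i * exp (t * m i)) ^ n i) = (\<Prod>i\<in>A. N i ^ n i * exp (t * (m i * real (n i))))"
    by (rule prod.cong) (auto simp: power_mult_distrib exp_of_nat_mult[symmetric] algebra_simps)
  also have "\<dots> = (\<Prod>i\<in>A. N i ^ n i) * (\<Prod>i\<in>A. exp (t * (m i * real (n i))))"
    by (rule prod.distrib)
  also have "(\<Prod>i\<in>A. exp (t * (m i * real (n i)))) = exp (t * (\<Sum>i\<in>A. m i * real (n i)))"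
    by (cases "finite A") (simp_all add: exp_sum sum_distrib_left)
  finally show ?thesis .
qed

lemma sum_educt_part_eq_sum_product_part:
  assumes "(\<Sum>i\<in>A. m i * of_int (R i)) = (0::real)"
  shows "(\<Sum>i\<in>A. m i * real (nat (- R i))) = (\<Sum>i\<in>A. m i * real (nat (R i)))"
proof -
  have "(\<Sum>i\<in>A. m i * real (nat (R i))) - (\<Sum>i\<in>A. m i * real (nat (- R i)))
      = (\<Sum>i\<in>A. m i * of_int (R i))"
    by (simp add: sum_subtractf[symmetric] right_diff_distrib[symmetric]) (rule sum.cong, auto)
  with assms show ?thesis by simp
qed

lemma detailed_balance_at_exp_shift:
  assumes "detailed_balance_at \<Omega> \<R> K N" and "m \<in> conservation_laws \<Omega> \<R>"
  shows "detailed_balance_at \<Omega> \<R> K (\<lambda>i. N i * exp (t * m i))"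
  unfolding detailed_balance_at_def
proof (intro conjI ballI)
  show "\<And>i. i \<in> \<Omega> \<Longrightarrow> N i * exp (t * m i) > 0"
    using assms(1) by (simp add: detailed_balance_at_def)
  fix R assume R: "R \<in> \<R>"
  have "(\<Sum>i\<in>\<Omega>. m i * of_int (R i)) = 0"
    using assms(2) R unfolding conservation_laws_def by blast
  then have same_factor: "exp (t * (\<Sum>i\<in>\<Omega>. m i * real (nat (- R i))))
      = exp (t * (\<Sum>i\<in>\<Omega>. m i * real (nat (R i))))"
    by (simp only: sum_educt_part_eq_sum_product_part)
  have balance: "K R * (\<Prod>i\<in>\<Omega>. N i ^ nat (- R i)) = K (\<lambda>i. - R i) * (\<Prod>i\<in>\<Omega>. N i ^ nat (R i))"
    using assms(1) R unfolding detailed_balance_at_def by blast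
  show "K R * (\<Prod>i\<in>\<Omega>. (N i * exp (t * m i)) ^ nat (- R i))
      = K (\<lambda>i. - R i) * (\<Prod>i\<in>\<Omega>. (N i * exp (t * m i)) ^ nat (R i))"
    unfolding prod_power_mult_exp mult.assoc[symmetric] balance same_factor ..
qed

lemma detailed_balance_at_prescribed_value:
  assumes "detailed_balance_at \<Omega> \<R> K N" and "m \<in> conservation_laws \<Omega> \<R>"
    and "s \<in> \<Omega>" and "m s \<noteq> 0" and "ns > 0"
  obtains N' where "detailed_balance_at \<Omega> \<R> K N'" and "N' s = ns"
proof
  define t where "t = ln (ns / N s) / m s"
  show "detailed_balance_at \<Omega> \<R> K (\<lambda>i. N i * exp (t * m i))"
    using assms(1,2) by (rule detailed_balance_at_exp_shift)
  have "N s > 0" using assms(1,3) by (simp add: detailed_balance_at_def)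
  then show "N s * exp (t * m s) = ns"
    using assms(4,5) by (simp add: t_def)
qed

lemma prod_remove_proj_away:
  assumes "finite A" and "s \<in> A"
  shows "(\<Prod>i\<in>A. (f i::real) ^ nat (g i)) = f s ^ nat (g s) * (\<Prod>i\<in>A - {s}. f i ^ nat (proj_away s g i))"
proof -
  have "(\<Prod>i\<in>A - {s}. f i ^ nat (proj_away s g i)) = (\<Prod>i\<in>A - {s}. f i ^ nat (g i))"
    by (rule prod.cong) (auto simp: proj_away_def)
  then show ?thesis using assms by (simp add: prod.remove)
qed

lemma proj_away_uminus: "proj_away s (\<lambda>i. - R i) = (\<lambda>i. - proj_away s R i)"
  by (auto simp: proj_away_def)

lemma detailed_balance_at_proj_away:
  assumes "detailed_balance_at \<Omega> \<R> K N" and "finite \<Omega>" and "s \<in> \<Omega>" and "Rb \<in> \<R>"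
  shows "K Rb * N s ^ nat (- Rb s) * (\<Prod>i\<in>\<Omega> - {s}. N i ^ nat (- proj_away s Rb i))
    = K (\<lambda>i. - Rb i) * N s ^ nat (Rb s) * (\<Prod>i\<in>\<Omega> - {s}. N i ^ nat (proj_away s Rb i))"
proof -
  have "K Rb * (\<Prod>i\<in>\<Omega>. N i ^ nat (- Rb i)) = K (\<lambda>i. - Rb i) * (\<Prod>i\<in>\<Omega>. N i ^ nat (Rb i))"
    using assms(1,4) by (simp add: detailed_balance_at_def)
  then show ?thesis
    using prod_remove_proj_away[OF assms(2,3), of N "\<lambda>i. - Rb i"]
      prod_remove_proj_away[OF assms(2,3), of N Rb]
    by (simp add: proj_away_uminus mult.assoc)
qed

lemma sum_proj_away_fibre_uminus:
  assumes "\<And>R. R \<in> \<R> \<Longrightarrow> (\<lambda>i. - R i) \<in> \<R>"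
  shows "(\<Sum>Rb\<in>{Rb\<in>\<R>. proj_away s Rb = R}. f (\<lambda>i. - Rb i))
       = (\<Sum>Rb\<in>{Rb\<in>\<R>. proj_away s Rb = (\<lambda>i. - R i)}. f Rb)"
  by (rule sum.reindex_bij_witness[where i="\<lambda>R i. - R i" and j="\<lambda>R i. - R i"])
    (auto simp: proj_away_uminus assms)

lemma detailed_balance_at_reduced:
  assumes "detailed_balance_at \<Omega> \<R> K N" and "finite \<Omega>" and "s \<in> \<Omega>"
    and "\<And>R. R \<in> \<R> \<Longrightarrow> (\<lambda>i. - R i) \<in> \<R>"
  shows "detailed_balance_at (\<Omega> - {s}) \<R>' (reduced_rates s \<R> K (N s)) N"
  unfolding detailed_balance_at_def
proof (intro conjI ballI)
  show "\<And>i. i \<in> \<Omega> - {s} \<Longrightarrow> N i > 0"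
    using assms(1) by (simp add: detailed_balance_at_def)
  fix R
  let ?V = "\<Omega> - {s}" and ?S = "\<lambda>R. {Rb\<in>\<R>. proj_away s Rb = R}"
  have "reduced_rates s \<R> K (N s) R * (\<Prod>i\<in>?V. N i ^ nat (- R i))
      = (\<Sum>Rb\<in>?S R. K Rb * N s ^ nat (- Rb s) * (\<Prod>i\<in>?V. N i ^ nat (- proj_away s Rb i)))"
    unfolding reduced_rates_def sum_distrib_right by (rule sum.cong) auto
  also have "\<dots> = (\<Sum>Rb\<in>?S R. K (\<lambda>i. - Rb i) * N s ^ nat (Rb s) * (\<Prod>i\<in>?V. N i ^ nat (R i)))"
    by (rule sum.cong) (auto simp: detailed_balance_at_proj_away[OF assms(1-3)])
  also have "\<dots> = (\<Sum>Rb\<in>?S (\<lambda>i. - R i). K Rb * N s ^ nat (- Rb s) * (\<Prod>i\<in>?V. N i ^ nat (R i)))"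
    using sum_proj_away_fibre_uminus[OF assms(4), where s = s and R = R
        and f = "\<lambda>Rb. K Rb * N s ^ nat (- Rb s) * (\<Prod>i\<in>?V. N i ^ nat (R i))"]
    by simp
  also have "\<dots> = reduced_rates s \<R> K (N s) (\<lambda>i. - R i) * (\<Prod>i\<in>?V. N i ^ nat (R i))"
    unfolding reduced_rates_def sum_distrib_right ..
  finally show "reduced_rates s \<R> K (N s) R * (\<Prod>i\<in>?V. N i ^ nat (- R i))
      = reduced_rates s \<R> K (N s) (\<lambda>i. - R i) * (\<Prod>i\<in>?V. N i ^ nat (R i))" .
qed

lemma conservation_laws_nontrivial:
  assumes "conservation_laws \<Omega> \<R> \<noteq> {\<lambda>_. 0}"
  obtains m s where "m \<in> conservation_laws \<Omega> \<R>" and "s \<in> \<Omega>" and "m s \<noteq> 0"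
proof -
  have "(\<lambda>_. 0) \<in> conservation_laws \<Omega> \<R>" by (simp add: conservation_laws_def)
  then obtain m where m: "m \<in> conservation_laws \<Omega> \<R>" "m \<noteq> (\<lambda>_. 0)" using assms by blast
  then obtain s where "m s \<noteq> 0" by auto
  moreover from this m(1) have "s \<in> \<Omega>" by (auto simp: conservation_laws_def)
  ultimately show thesis using m(1) that by blast
qed

theorem corollary5p2:
  fixes \<Omega> :: "'a set" and \<R> :: "('a \<Rightarrow> int) set" and K :: "('a \<Rightarrow> int) \<Rightarrow> real"
  assumes "kinetic_system \<Omega> \<R> K"
    and "detailed_balance \<Omega> \<R> K"
    and "conservation_laws \<Omega> \<R> \<noteq> {\<lambda>_. 0}"
  shows "\<exists>s\<in>\<Omega>. \<forall>ns::real. ns > 0 \<longrightarrow>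
           detailed_balance (\<Omega> - {s}) (reduced_reactions s \<R>) (reduced_rates s \<R> K ns)"
proof -
  have fin: "finite \<Omega>" and neg: "\<And>R. R \<in> \<R> \<Longrightarrow> (\<lambda>i. - R i) \<in> \<R>"
    using assms(1) by (auto simp: kinetic_system_def)
  obtain N where N: "detailed_balance_at \<Omega> \<R> K N"
    using assms(2) fin by (auto simp: detailed_balance_iff_ex_detailed_balance_at)
  obtain m s where m: "m \<in> conservation_laws \<Omega> \<R>" and s: "s \<in> \<Omega>" "m s \<noteq> 0"
    using assms(3) by (rule conservation_laws_nontrivial)
  have "detailed_balance (\<Omega> - {s}) (reduced_reactions s \<R>) (reduced_rates s \<R> K ns)"
    if "ns > 0" for ns :: real
  proof -
    obtain N' where N': "detailed_balance_at \<Omega> \<R> K N'" and "N' s = ns"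
      using detailed_balance_at_prescribed_value[OF N m s \<open>ns > 0\<close>] .
    then have "detailed_balance_at (\<Omega> - {s}) (reduced_reactions s \<R>) (reduced_rates s \<R> K ns) N'"
      using detailed_balance_at_reduced[OF N' fin s(1) neg] by simp
    then show ?thesis using fin by (auto simp: detailed_balance_iff_ex_detailed_balance_at)
  qed
  with s(1) show ?thesis by blast
qed

end
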